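(* Let $m\ge3$. The matrices $\mathcal{M}^{t,p}_{i,j}$ ($(i,j,t,p)\in\mathcal{I}_{(m,m)}$), $\mathcal{R}^{t,p}_{i,j}$ ($(i,j,t,p)\in\mathcal{I}_{(m,m+1)}$), $\mathcal{L}^{t,p}_{i,j}$ ($(i,j,t,p)\in\mathcal{I}_{(m+1,m)}$) and $\mathcal{F}^{t,p}_{i,j}$ ($(i,j,t,p)\in\mathcal{I}_{(m+1,m+1)}$) form a basis of the Terwilliger algebra $T=T(x_0)$ of $2.O_{m+1}$.
   Context: $S=\{1,\dots,2m+1\}$, $X=\binom{S}{m}\cup\binom{S}{m+1}$; the doubled Odd graph $2.O_{m+1}$ has vertex set $X$, two vertices adjacent iff one is a proper subset of the other, with distance $\partial$. $x_0=\{1,\dots,m\}$. $T$ is the subalgebra of complex $X\times X$ matrices generated by the adjacency matrix $A_1$ and the diagonal matrices $E^*_i$ ($0\le i\le 2m+1$) with $(y,y)$-entry $1$ iff $\partial(x_0,y)=i$. For $y,z\subseteq S$, $\varrho(y,z)=(|x_0\cap y|,|x_0\cap z|,|y\cap z|,|x_0\cap y\cap z|)$; for $a,b\in\{m,m+1\}$, $\mathcal{I}_{(a,b)}=\{\varrho(y,z):y\in\binom{S}{a},z\in\binom{S}{b}\}$ and $X^{(i,j,t,p)}_{(a,b)}=\{(y,z)\in\binom{S}{a}\times\binom{S}{b}:\varrho(y,z)=(i,j,t,p)\}$. The matrices $\mathcal{M}^{t,p}_{i,j}$, $\mathcal{R}^{t,p}_{i,j}$, $\mathcal{L}^{t,p}_{i,j}$,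 $\mathcal{F}^{t,p}_{i,j}$ are the $X\times X$ $0/1$ matrices whose $(y,z)$-entry is $1$ iff $(y,z)$ lies in $X^{(i,j,t,p)}_{(m,m)}$, $X^{(i,j,t,p)}_{(m,m+1)}$, $X^{(i,j,t,p)}_{(m+1,m)}$, $X^{(i,j,t,p)}_{(m+1,m+1)}$ respectively. *)

theory Defs
  imports Complex_Main "HOL-Library.Function_Algebras"
begin

text \<open>Matrices indexed by X x X are represented as functions
  nat set => nat set => complex (entries outside X x X are zero for all
  matrices considered).\<close>

type_synonym cmat = "nat set \<Rightarrow> nat set \<Rightarrow> complex"

definition Sset :: "nat \<Rightarrow> nat set" where
  "Sset m = {1..2*m+1}"

definition Xset :: "nat \<Rightarrow> nat set set" where
  "Xset m = {y. y \<subseteq> Sset m \<and> (card y = m \<or> card y = m + 1)}"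

definition x0 :: "nat \<Rightarrow> nat set" where
  "x0 m = {1..m}"

definition adj :: "nat \<Rightarrow> nat set \<Rightarrow> nat set \<Rightarrow> bool" where
  "adj m y z \<longleftrightarrow> y \<in> Xset m \<and> z \<in> Xset m \<and> (y \<subset> z \<or> z \<subset> y)"

definition gdist :: "nat \<Rightarrow> nat set \<Rightarrow> nat set \<Rightarrow> nat" where
  "gdist m y z = (LEAST n. (y, z) \<in> ({(u, v). adj m u v} ^^ n))"

definition cscale :: "complex \<Rightarrow> cmat \<Rightarrow> cmat" where
  "cscale c A = (\<lambda>y z. c * A y z)"

definition mmult :: "nat \<Rightarrow> cmat \<Rightarrow> cmat \<Rightarrow> cmat" where
  "mmult m A B = (\<lambda>y z. \<Sum>w\<in>Xset m. A y w * B w z)"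

definition idmat :: "nat \<Rightarrow> cmat" where
  "idmat m = (\<lambda>y z. if y \<in> Xset m \<and> y = z then 1 else 0)"

definition A1 :: "nat \<Rightarrow> cmat" where
  "A1 m = (\<lambda>y z. if adj m y z then 1 else 0)"

definition Estar :: "nat \<Rightarrow> nat \<Rightarrow> cmat" where
  "Estar m i = (\<lambda>y z. if y \<in> Xset m \<and> y = z \<and> gdist m (x0 m) y = i then 1 else 0)"

inductive_set Talg :: "nat \<Rightarrow> cmat set" for m where
  gen_id: "idmat m \<in> Talg m"
| gen_A: "A1 m \<in> Talg m"
| gen_E: "i \<le> 2*m+1 \<Longrightarrow> Estar m i \<in> Talg m"
| add: "A \<in> Talg m \<Longrightarrow> B \<in> Talg m \<Longrightarrow> A + B \<in> Talg m"
| scale: "A \<in> Talg m \<Longrightarrow> cscale c A \<in> Talg m"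
| mult: "A \<in> Talg m \<Longrightarrow> B \<in> Talg m \<Longrightarrow> mmult m A B \<in> Talg m"

definition rho :: "nat \<Rightarrow> nat set \<Rightarrow> nat set \<Rightarrow> nat \<times> nat \<times> nat \<times> nat" where
  "rho m y z = (card (x0 m \<inter> y), card (x0 m \<inter> z), card (y \<inter> z), card (x0 m \<inter> y \<inter> z))"

definition ksub :: "nat \<Rightarrow> nat \<Rightarrow> nat set set" where
  "ksub m a = {y. y \<subseteq> Sset m \<and> card y = a}"

definition Iset :: "nat \<Rightarrow> nat \<Rightarrow> nat \<Rightarrow> (nat \<times> nat \<times> nat \<times> nat) set" where
  "Iset m a b = {rho m y z | y z. y \<in> ksub m a \<and> z \<in> ksub m b}"

definition Xrel :: "nat \<Rightarrow> nat \<Rightarrow> nat \<Rightarrow> nat \<times> nat \<times> nat \<times> nat \<Rightarrow> (nat set \<times> nat set) set" where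
  "Xrel m a b q = {(y, z). y \<in> ksub m a \<and> z \<in> ksub m b \<and> rho m y z = q}"

definition blockmat :: "nat \<Rightarrow> nat \<Rightarrow> nat \<Rightarrow> nat \<times> nat \<times> nat \<times> nat \<Rightarrow> cmat" where
  "blockmat m a b q = (\<lambda>y z. if (y, z) \<in> Xrel m a b q then 1 else 0)"

definition Mmat :: "nat \<Rightarrow> nat \<times> nat \<times> nat \<times> nat \<Rightarrow> cmat" where
  "Mmat m q = blockmat m m m q"
definition Rmat :: "nat \<Rightarrow> nat \<times> nat \<times> nat \<times> nat \<Rightarrow> cmat" where
  "Rmat m q = blockmat m m (m+1) q"
definition Lmat :: "nat \<Rightarrow> nat \<times> nat \<times> nat \<times> nat \<Rightarrow> cmat" where
  "Lmat m q = blockmat m (m+1) m q"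
definition Fmat :: "nat \<Rightarrow> nat \<times> nat \<times> nat \<times> nat \<Rightarrow> cmat" where
  "Fmat m q = blockmat m (m+1) (m+1) q"

definition bfam :: "nat \<Rightarrow> nat \<times> (nat \<times> nat \<times> nat \<times> nat) \<Rightarrow> cmat" where
  "bfam m kq = (case kq of (k, q) \<Rightarrow>
     if k = 0 then Mmat m q else if k = 1 then Rmat m q else if k = 2 then Lmat m q else Fmat m q)"

definition bidx :: "nat \<Rightarrow> (nat \<times> (nat \<times> nat \<times> nat \<times> nat)) set" where
  "bidx m = ({0} \<times> Iset m m m) \<union> ({1} \<times> Iset m m (m+1))
          \<union> ({2} \<times> Iset m (m+1) m) \<union> ({3} \<times> Iset m (m+1) (m+1))"

end

theory Submission
  imports Defs
begin

text \<open>The permutations of S fixing x0 act on X \<times> X, and two pairs (y, z), (y', z') lie in the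
  same orbit iff they have the same key (|y|, |z|, \<rho>(y, z)); the matrices of the statement are
  the characteristic matrices of these orbits. The generators of T commute with this action, so
  every matrix of T is constant on orbits and hence a combination of orbit matrices.
  Conversely, every orbit matrix lies in T, by induction on the distance |y \<Delta> z| of the pair:
  if z' is a neighbour of z closer to y and i = \<partial>(x0, z), then the orbit matrix of (y, z')
  times A1 times E*_i is a nonzero multiple of the orbit matrix of (y, z) plus orbit matrices at
  smaller distance, because the key of (y, z) is determined by that of (y, z') and by i.
  Orbit matrices have disjoint supports, hence are linearly independent.\<close>

definition symdiff_card :: "'a set \<Rightarrow> 'a set \<Rightarrow> nat" where
  "symdiff_card a b = card (a - b) + card (b - a)"

lemma symdiff_card_commute: "symdiff_card a b = symdiff_card b a"
  by (simp add: symdiff_card_def)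

lemma symdiff_card_self [simp]: "symdiff_card a a = 0"
  by (simp add: symdiff_card_def)

lemma symdiff_card_eq_0_iff: "finite a \<Longrightarrow> finite b \<Longrightarrow> symdiff_card a b = 0 \<longleftrightarrow> a = b"
  by (auto simp: symdiff_card_def)

lemma symdiff_card_Int:
  "finite a \<Longrightarrow> finite b \<Longrightarrow> symdiff_card a b + 2 * card (a \<inter> b) = card a + card b"
  using card_Int_Diff[of a b] card_Int_Diff[of b a] by (simp add: symdiff_card_def Int_commute)

lemma symdiff_card_insert_mem:
  assumes "finite a" "b \<notin> w" "b \<in> a"
  shows "symdiff_card a (insert b w) + 1 = symdiff_card a w"
proof -
  have "a - insert b w = (a - w) - {b}" "insert b w - a = w - a" using assms by auto
  moreover have "card ((a - w) - {b}) + 1 = card (a - w)"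
    using assms card.remove[of "a - w" b] by simp
  ultimately show ?thesis by (simp add: symdiff_card_def)
qed

lemma symdiff_card_insert_notin:
  assumes "finite w" "b \<notin> w" "b \<notin> a"
  shows "symdiff_card a (insert b w) = symdiff_card a w + 1"
proof -
  have "a - insert b w = a - w" "insert b w - a = insert b (w - a)" using assms by auto
  then show ?thesis using assms by (simp add: symdiff_card_def)
qed

lemma symdiff_card_remove_mem:
  "finite a \<Longrightarrow> b \<in> w \<Longrightarrow> b \<in> a \<Longrightarrow> symdiff_card a (w - {b}) = symdiff_card a w + 1"
  using symdiff_card_insert_mem[of a b "w - {b}"] by (simp add: insert_absorb)

lemma symdiff_card_remove_notin:
  "finite w \<Longrightarrow> b \<in> w \<Longrightarrow> b \<notin> a \<Longrightarrow> symdiff_card a (w - {b}) + 1 = symdiff_card a w"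
  using symdiff_card_insert_notin[of "w - {b}" b a] by (simp add: insert_absorb)

lemma card_Venn_region:
  assumes "finite W" "U \<subseteq> W" "V \<subseteq> W"
  shows "card {s\<in>W. (s \<in> U, s \<in> V) = k} =
    (case k of (True, True) \<Rightarrow> card (U \<inter> V) | (True, False) \<Rightarrow> card U - card (U \<inter> V)
     | (False, True) \<Rightarrow> card V - card (U \<inter> V)
     | (False, False) \<Rightarrow> card W + card (U \<inter> V) - card U - card V)"
proof -
  have fin: "finite U" "finite V" using assms finite_subset by auto
  obtain a b where k: "k = (a, b)" by (cases k)
  show ?thesis
  proof (cases a; cases b)
    assume "a" "b"
    then have "{s\<in>W. (s \<in> U, s \<in> V) = k} = U \<inter> V" using k assms by auto
    then show ?thesis using \<open>a\<close> \<open>b\<close> k by simp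
  next
    assume "a" "\<not> b"
    then have "{s\<in>W. (s \<in> U, s \<in> V) = k} = U - V" using k assms by auto
    then show ?thesis using \<open>a\<close> \<open>\<not> b\<close> k fin by (simp add: card_Diff_subset_Int)
  next
    assume "\<not> a" "b"
    then have "{s\<in>W. (s \<in> U, s \<in> V) = k} = V - U" using k assms by auto
    then show ?thesis using \<open>\<not> a\<close> \<open>b\<close> k fin by (simp add: card_Diff_subset_Int Int_commute)
  next
    assume "\<not> a" "\<not> b"
    then have "{s\<in>W. (s \<in> U, s \<in> V) = k} = W - (U \<union> V)" using k by auto
    moreover have "card (W - (U \<union> V)) = card W - card (U \<union> V)"
      using card_Diff_subset[of "U \<union> V" W] fin assms by auto
    moreover have "card U + card V = card (U \<union> V) + card (U \<inter> V)" using card_Un_Int fin by blast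
    moreover have "card (U \<union> V) \<le> card W" using card_mono[OF assms(1)] assms by auto
    ultimately show ?thesis using \<open>\<not> a\<close> \<open>\<not> b\<close> k by simp
  qed
qed

lemma bij_betw_preserving_fibres:
  assumes "finite A" "finite B" "\<And>k. card {a\<in>A. f a = k} = card {b\<in>B. g b = k}"
  obtains \<sigma> where "bij_betw \<sigma> A B" "\<And>a. a \<in> A \<Longrightarrow> g (\<sigma> a) = f a"
proof -
  have "\<exists>h. bij_betw h {a\<in>A. f a = k} {b\<in>B. g b = k}" for k
    by (rule finite_same_card_bij) (use assms in auto)
  then obtain h where h: "\<And>k. bij_betw (h k) {a\<in>A. f a = k} {b\<in>B. g b = k}" by metis
  define \<sigma> where "\<sigma> a = h (f a) a" for a
  have img: "\<sigma> a \<in> B \<and> g (\<sigma> a) = f a" if "a \<in> A" for a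
    using bij_betwE[OF h[of "f a"]] that by (auto simp: \<sigma>_def)
  have "inj_on \<sigma> A"
  proof (rule inj_onI)
    fix a1 a2 assume a: "a1 \<in> A" "a2 \<in> A" "\<sigma> a1 = \<sigma> a2"
    then have "f a1 = f a2" using img by metis
    with a show "a1 = a2"
      using bij_betw_imp_inj_on[OF h[of "f a1"]] by (auto simp: \<sigma>_def inj_on_def)
  qed
  moreover have "\<sigma> ` A = B"
  proof
    show "B \<subseteq> \<sigma> ` A"
    proof
      fix b assume "b \<in> B"
      then have "b \<in> h (g b) ` {a\<in>A. f a = g b}" using bij_betw_imp_surj_on[OF h[of "g b"]] by auto
      then obtain a where "a \<in> A" "f a = g b" "b = h (g b) a" by auto
      then show "b \<in> \<sigma> ` A" unfolding \<sigma>_def by (intro image_eqI[of _ _ a]) simp_all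
    qed
  qed (use img in auto)
  ultimately show ?thesis using img by (intro that) (auto simp: bij_betw_def)
qed

lemma Venn_equivalent_imp_permutation:
  assumes "finite W" "U \<subseteq> W" "V \<subseteq> W" "U' \<subseteq> W" "V' \<subseteq> W"
    and "card U = card U'" "card V = card V'" "card (U \<inter> V) = card (U' \<inter> V')"
  obtains \<sigma> where "bij_betw \<sigma> W W" "\<And>s. s \<in> W \<Longrightarrow> (\<sigma> s \<in> U') = (s \<in> U) \<and> (\<sigma> s \<in> V') = (s \<in> V)"
proof -
  have fibres: "card {s\<in>W. (s \<in> U, s \<in> V) = k} = card {s\<in>W. (s \<in> U', s \<in> V') = k}" for k
  proof -
    obtain a b where "k = (a, b)" by (cases k)
    then show ?thesis
      unfolding card_Venn_region[OF assms(1-3)] card_Venn_region[OF assms(1,4,5)]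
      using assms(6-8) by (cases a; cases b) simp_all
  qed
  obtain \<sigma> where "bij_betw \<sigma> W W" "\<And>s. s \<in> W \<Longrightarrow> (\<sigma> s \<in> U', \<sigma> s \<in> V') = (s \<in> U, s \<in> V)"
    using bij_betw_preserving_fibres[OF assms(1,1) fibres] by blast
  then show ?thesis by (intro that) simp_all
qed

lemma bij_betw_image_eq_if_mem_iff:
  assumes "bij_betw \<sigma> S S" "P \<subseteq> S" "P' \<subseteq> S" "\<And>s. s \<in> S \<Longrightarrow> (\<sigma> s \<in> P') = (s \<in> P)"
  shows "\<sigma> ` P = P'"
proof
  show "\<sigma> ` P \<subseteq> P'" using assms by auto
  show "P' \<subseteq> \<sigma> ` P"
  proof
    fix s' assume "s' \<in> P'"
    moreover obtain s where "s \<in> S" "s' = \<sigma> s"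
      using \<open>s' \<in> P'\<close> assms(1,3) by (auto simp: bij_betw_def)
    ultimately show "s' \<in> \<sigma> ` P" using assms(4) by auto
  qed
qed

lemma bij_betw_piecewise:
  assumes "bij_betw f A A" "bij_betw g (S - A) (S - A)" "A \<subseteq> S"
  shows "bij_betw (\<lambda>s. if s \<in> A then f s else g s) S S"
proof -
  let ?h = "\<lambda>s. if s \<in> A then f s else g s"
  have "bij_betw ?h A A" using assms(1) by (rule bij_betw_cong[THEN iffD1, rotated]) simp
  moreover have "bij_betw ?h (S - A) (S - A)"
    using assms(2) by (rule bij_betw_cong[THEN iffD1, rotated]) simp
  ultimately have "bij_betw ?h (A \<union> (S - A)) (A \<union> (S - A))" by (rule bij_betw_combine) auto
  then show ?thesis using assms(3) by (simp add: Un_Diff_cancel2 sup.absorb2)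
qed

lemma finite_Sset [simp]: "finite (Sset m)"
  by (simp add: Sset_def)

lemma finite_Xset: "finite (Xset m)"
proof (rule finite_subset)
  show "Xset m \<subseteq> Pow (Sset m)" by (auto simp: Xset_def)
qed simp

lemma Xset_subset: "y \<in> Xset m \<Longrightarrow> y \<subseteq> Sset m"
  by (simp add: Xset_def)

lemma finite_Xset_member: "y \<in> Xset m \<Longrightarrow> finite y"
  using finite_subset[OF Xset_subset finite_Sset] .

lemma card_Xset_member: "y \<in> Xset m \<Longrightarrow> card y = m \<or> card y = m + 1"
  by (simp add: Xset_def)

lemma x0_subset_Sset: "x0 m \<subseteq> Sset m"
  by (auto simp: x0_def Sset_def)

lemma card_x0 [simp]: "card (x0 m) = m"
  by (simp add: x0_def)

lemma finite_x0 [simp]: "finite (x0 m)"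
  by (simp add: x0_def)

lemma x0_in_Xset: "x0 m \<in> Xset m"
  using x0_subset_Sset by (simp add: Xset_def)

lemma adjE:
  assumes "adj m u v"
  obtains (up) b where "b \<notin> u" "b \<in> Sset m" "v = insert b u" "card u = m"
    | (down) b where "b \<in> u" "v = u - {b}" "card u = m + 1"
proof -
  have u: "u \<in> Xset m" and v: "v \<in> Xset m" and "u \<subset> v \<or> v \<subset> u"
    using assms by (auto simp: adj_def)
  then consider "u \<subset> v" | "v \<subset> u" by blast
  then show thesis
  proof cases
    case 1
    then have "card u < card v" using finite_Xset_member[OF v] psubset_card_mono by blast
    then have "card u = m" "card (v - u) = 1"
      using 1 card_Xset_member[OF u] card_Xset_member[OF v] card_Diff_subset[of u v]
        finite_Xset_member[OF u] by auto
    moreover obtain b where "v - u = {b}" using \<open>card (v - u) = 1\<close> by (auto simp: card_Suc_eq)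
    ultimately show thesis using 1 Xset_subset[OF v] by (intro up[of b]) auto
  next
    case 2
    then have "card v < card u" using finite_Xset_member[OF u] psubset_card_mono by blast
    then have "card u = m + 1" "card (u - v) = 1"
      using 2 card_Xset_member[OF u] card_Xset_member[OF v] card_Diff_subset[of v u]
        finite_Xset_member[OF v] by auto
    moreover obtain b where "u - v = {b}" using \<open>card (u - v) = 1\<close> by (auto simp: card_Suc_eq)
    ultimately show thesis using 2 by (intro down[of b]) auto
  qed
qed

lemma symdiff_card_adj_le:
  assumes "adj m w c" "finite a"
  shows "symdiff_card a c \<le> symdiff_card a w + 1"
proof -
  have "finite w" using assms(1) finite_Xset_member by (auto simp: adj_def)
  from assms(1) show ?thesis
  proof (cases rule: adjE)
    case (up b)
    then show ?thesis using assms(2) \<open>finite w\<close>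
      symdiff_card_insert_mem[of a b w] symdiff_card_insert_notin[of w b a] by (cases "b \<in> a") auto
  next
    case (down b)
    then show ?thesis using assms(2) \<open>finite w\<close>
      symdiff_card_remove_mem[of a b w] symdiff_card_remove_notin[of w b a] by (cases "b \<in> a") auto
  qed
qed

abbreviation adj_rel :: "nat \<Rightarrow> (nat set \<times> nat set) set" where
  "adj_rel m \<equiv> {(u, v). adj m u v}"

lemma symdiff_card_le_if_relpow:
  "(a, c) \<in> adj_rel m ^^ n \<Longrightarrow> finite a \<Longrightarrow> symdiff_card a c \<le> n"
proof (induction n arbitrary: c)
  case (Suc n)
  then obtain w where "(a, w) \<in> adj_rel m ^^ n" "adj m w c" by (auto elim: relpow_Suc_E)
  then show ?case using Suc symdiff_card_adj_le[of m w c a] by fastforce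
qed simp

lemma adj_towards:
  assumes a: "a \<in> Xset m" and b: "b \<in> Xset m" and "a \<noteq> b"
  obtains a' where "adj m a a'" "symdiff_card b a' + 1 = symdiff_card b a"
proof (cases "card a = m")
  case True
  have "\<not> b \<subseteq> a"
  proof
    assume "b \<subseteq> a"
    moreover have "card b \<le> card a" using card_mono[OF finite_Xset_member[OF a] \<open>b \<subseteq> a\<close>] .
    then have "card b = card a" using card_Xset_member[OF b] True by auto
    ultimately show False using \<open>a \<noteq> b\<close> card_subset_eq[OF finite_Xset_member[OF a]] by blast
  qed
  then obtain c where c: "c \<in> b" "c \<notin> a" by blast
  then have "insert c a \<in> Xset m"
    using a Xset_subset[OF b] True finite_Xset_member[OF a] by (auto simp: Xset_def)
  then have "adj m a (insert c a)" using a c by (auto simp: adj_def)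
  then show thesis
    using symdiff_card_insert_mem[OF finite_Xset_member[OF b] c(2,1)] by (rule that)
next
  case False
  then have ca: "card a = m + 1" using card_Xset_member[OF a] by auto
  have "\<not> a \<subseteq> b"
  proof
    assume "a \<subseteq> b"
    moreover have "card a \<le> card b" using card_mono[OF finite_Xset_member[OF b] \<open>a \<subseteq> b\<close>] .
    then have "card a = card b" using card_Xset_member[OF b] ca by auto
    ultimately show False using \<open>a \<noteq> b\<close> card_subset_eq[OF finite_Xset_member[OF b]] by blast
  qed
  then obtain c where c: "c \<in> a" "c \<notin> b" by blast
  then have "a - {c} \<in> Xset m" using Xset_subset[OF a] ca by (auto simp: Xset_def)
  then have "adj m a (a - {c})" using a c by (auto simp: adj_def)
  then show thesis
    using symdiff_card_remove_notin[OF finite_Xset_member[OF a] c] by (rule that)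
qed

lemma relpow_adj_if_symdiff_card:
  "a \<in> Xset m \<Longrightarrow> b \<in> Xset m \<Longrightarrow> symdiff_card b a = n \<Longrightarrow> (a, b) \<in> adj_rel m ^^ n"
proof (induction n arbitrary: a)
  case 0
  then have "a = b" using symdiff_card_eq_0_iff[of b a] finite_Xset_member by blast
  then show ?case by simp
next
  case (Suc n)
  then have "a \<noteq> b" by auto
  then obtain a' where a': "adj m a a'" "symdiff_card b a' + 1 = symdiff_card b a"
    using adj_towards Suc.prems(1,2) by blast
  have "a' \<in> Xset m" using a'(1) by (simp add: adj_def)
  then have "(a', b) \<in> adj_rel m ^^ n" using Suc.IH Suc.prems(2,3) a'(2) by simp
  then show ?case using a'(1) by (intro relpow_Suc_I2) auto
qed

lemma gdist_eq_symdiff_card: "a \<in> Xset m \<Longrightarrow> b \<in> Xset m \<Longrightarrow> gdist m a b = symdiff_card a b"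
  unfolding gdist_def
proof (rule Least_equality)
  show "(a, b) \<in> adj_rel m ^^ symdiff_card a b" if "a \<in> Xset m" "b \<in> Xset m"
    using relpow_adj_if_symdiff_card that symdiff_card_commute by metis
  show "symdiff_card a b \<le> n" if "a \<in> Xset m" "(a, b) \<in> adj_rel m ^^ n" for n
    using symdiff_card_le_if_relpow finite_Xset_member that by blast
qed

lemma symdiff_card_x0:
  "y \<in> Xset m \<Longrightarrow> symdiff_card (x0 m) y + 2 * card (x0 m \<inter> y) = m + card y"
  using symdiff_card_Int[of "x0 m" y] finite_Xset_member by simp

lemma symdiff_card_x0_le: "y \<in> Xset m \<Longrightarrow> symdiff_card (x0 m) y \<le> 2 * m + 1"
  using symdiff_card_x0[of y m] card_Xset_member[of y m] by auto

lemma Estar_eq: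
  "Estar m i = (\<lambda>y z. if y \<in> Xset m \<and> y = z \<and> symdiff_card (x0 m) y = i then 1 else 0)"
  unfolding Estar_def using gdist_eq_symdiff_card[OF x0_in_Xset] by (intro ext) auto

type_synonym key = "nat \<times> nat \<times> nat \<times> nat \<times> nat \<times> nat"

definition key :: "nat \<Rightarrow> nat set \<Rightarrow> nat set \<Rightarrow> key" where
  "key m y z = (card y, card z, rho m y z)"

lemma key_eq_iff:
  "key m y z = key m y' z' \<longleftrightarrow> card y = card y' \<and> card z = card z' \<and>
     card (x0 m \<inter> y) = card (x0 m \<inter> y') \<and> card (x0 m \<inter> z) = card (x0 m \<inter> z') \<and>
     card (y \<inter> z) = card (y' \<inter> z') \<and> card (x0 m \<inter> y \<inter> z) = card (x0 m \<inter> y' \<inter> z')"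
  by (auto simp: key_def rho_def)

lemma key_eq_imp_eq_iff:
  assumes "y \<in> Xset m" "z \<in> Xset m" "y' \<in> Xset m" "z' \<in> Xset m" "key m y z = key m y' z'"
  shows "y = z \<longleftrightarrow> y' = z'"
proof -
  have "y = z \<longleftrightarrow> card (y \<inter> z) = card y \<and> card (y \<inter> z) = card z"
    if "finite y" "finite z" for y z :: "nat set"
    using that by (metis Int_lower1 Int_lower2 card_subset_eq inf.idem)
  then show ?thesis using assms finite_Xset_member by (simp add: key_eq_iff)
qed

lemma key_eq_imp_symdiff_card_eq:
  assumes "y \<in> Xset m" "z \<in> Xset m" "y' \<in> Xset m" "z' \<in> Xset m" "key m y z = key m y' z'"
  shows "symdiff_card y z = symdiff_card y' z'"
  using symdiff_card_Int[of y z] symdiff_card_Int[of y' z'] assms finite_Xset_member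
  by (simp add: key_eq_iff)

lemma key_eq_imp_symdiff_card_x0_eq:
  "y \<in> Xset m \<Longrightarrow> y' \<in> Xset m \<Longrightarrow> key m y z = key m y' z' \<Longrightarrow>
    symdiff_card (x0 m) y = symdiff_card (x0 m) y'"
  using symdiff_card_x0[of y m] symdiff_card_x0[of y' m] by (simp add: key_eq_iff)

lemma adj_iff_card:
  assumes "y \<in> Xset m" "z \<in> Xset m"
  shows "adj m y z \<longleftrightarrow>
    (card (y \<inter> z) = card y \<and> card y < card z) \<or> (card (y \<inter> z) = card z \<and> card z < card y)"
proof -
  have fin: "finite y" "finite z" using assms finite_Xset_member by auto
  have "a \<subset> b \<longleftrightarrow> card (a \<inter> b) = card a \<and> card a < card b"
    if "finite a" "finite b" for a b :: "nat set"
    using that psubset_card_mono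
    by (metis Int_lower1 card_subset_eq inf.absorb_iff1 inf.orderE less_le)
  then show ?thesis using assms fin by (auto simp: adj_def Int_commute)
qed

definition key_invariant :: "nat \<Rightarrow> cmat \<Rightarrow> bool" where
  "key_invariant m M \<longleftrightarrow> (\<forall>y z. y \<notin> Xset m \<or> z \<notin> Xset m \<longrightarrow> M y z = 0) \<and>
     (\<forall>y z y' z'. y \<in> Xset m \<longrightarrow> z \<in> Xset m \<longrightarrow> y' \<in> Xset m \<longrightarrow> z' \<in> Xset m \<longrightarrow>
        key m y z = key m y' z' \<longrightarrow> M y z = M y' z')"

lemma key_invariantI:
  assumes "\<And>y z. y \<notin> Xset m \<or> z \<notin> Xset m \<Longrightarrow> M y z = 0"
    and "\<And>y z y' z'. y \<in> Xset m \<Longrightarrow> z \<in> Xset m \<Longrightarrow> y' \<in> Xset m \<Longrightarrow> z' \<in> Xset m \<Longrightarrow>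
      key m y z = key m y' z' \<Longrightarrow> M y z = M y' z'"
  shows "key_invariant m M"
  using assms unfolding key_invariant_def by blast

lemma key_invariant_outside: "key_invariant m M \<Longrightarrow> y \<notin> Xset m \<or> z \<notin> Xset m \<Longrightarrow> M y z = 0"
  unfolding key_invariant_def by blast

lemma key_invariantD:
  "key_invariant m M \<Longrightarrow> y \<in> Xset m \<Longrightarrow> z \<in> Xset m \<Longrightarrow> y' \<in> Xset m \<Longrightarrow> z' \<in> Xset m \<Longrightarrow>
    key m y z = key m y' z' \<Longrightarrow> M y z = M y' z'"
  unfolding key_invariant_def by blast

lemma key_eq_imp_permutation:
  assumes y: "y \<in> Xset m" and z: "z \<in> Xset m" and y': "y' \<in> Xset m" and z': "z' \<in> Xset m"
    and key: "key m y z = key m y' z'"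
  obtains \<sigma> where "bij_betw \<sigma> (Sset m) (Sset m)" "\<sigma> ` x0 m = x0 m" "\<sigma> ` y = y'" "\<sigma> ` z = z'"
proof -
  let ?S = "Sset m" and ?x = "x0 m"
  let ?O = "?S - ?x"
  have sub: "y \<subseteq> ?S" "z \<subseteq> ?S" "y' \<subseteq> ?S" "z' \<subseteq> ?S" "?x \<subseteq> ?S"
    using y z y' z' Xset_subset x0_subset_Sset by auto
  have fin: "finite y" "finite z" "finite y'" "finite z'"
    using y z y' z' finite_Xset_member by auto
  have cards: "card y = card y'" "card z = card z'" "card (?x \<inter> y) = card (?x \<inter> y')"
    "card (?x \<inter> z) = card (?x \<inter> z')" "card (y \<inter> z) = card (y' \<inter> z')"
    "card (?x \<inter> y \<inter> z) = card (?x \<inter> y' \<inter> z')"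
    using key by (simp_all add: key_eq_iff)
  have outside_card: "card (a - ?x) = card a - card (?x \<inter> a)" if "finite a" for a
    using card_Diff_subset_Int[of a ?x] that by (simp add: Int_commute)
  have Int_outside: "(a - ?x) \<inter> (b - ?x) = (a \<inter> b) - ?x" for a b by auto
  obtain \<sigma>\<^sub>1 where \<sigma>\<^sub>1: "bij_betw \<sigma>\<^sub>1 ?x ?x"
      "\<And>s. s \<in> ?x \<Longrightarrow> (\<sigma>\<^sub>1 s \<in> ?x \<inter> y') = (s \<in> ?x \<inter> y) \<and> (\<sigma>\<^sub>1 s \<in> ?x \<inter> z') = (s \<in> ?x \<inter> z)"
    by (rule Venn_equivalent_imp_permutation[of ?x "?x \<inter> y" "?x \<inter> z" "?x \<inter> y'" "?x \<inter> z'"])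
      (use cards in \<open>auto simp: Int_assoc Int_left_commute\<close>)
  obtain \<sigma>\<^sub>2 where \<sigma>\<^sub>2: "bij_betw \<sigma>\<^sub>2 ?O ?O"
      "\<And>s. s \<in> ?O \<Longrightarrow> (\<sigma>\<^sub>2 s \<in> y' - ?x) = (s \<in> y - ?x) \<and> (\<sigma>\<^sub>2 s \<in> z' - ?x) = (s \<in> z - ?x)"
    by (rule Venn_equivalent_imp_permutation[of ?O "y - ?x" "z - ?x" "y' - ?x" "z' - ?x"])
      (use sub fin cards in \<open>auto simp: Int_outside outside_card Int_assoc\<close>)
  define \<sigma> where "\<sigma> s = (if s \<in> ?x then \<sigma>\<^sub>1 s else \<sigma>\<^sub>2 s)" for s
  have bij: "bij_betw \<sigma> ?S ?S"
    unfolding \<sigma>_def using \<sigma>\<^sub>1(1) \<sigma>\<^sub>2(1) sub(5) by (rule bij_betw_piecewise)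
  have mem: "(\<sigma> s \<in> ?x) = (s \<in> ?x) \<and> (\<sigma> s \<in> y') = (s \<in> y) \<and> (\<sigma> s \<in> z') = (s \<in> z)"
    if "s \<in> ?S" for s
  proof (cases "s \<in> ?x")
    case True
    then show ?thesis using \<sigma>\<^sub>1(2)[of s] bij_betwE[OF \<sigma>\<^sub>1(1)] by (auto simp: \<sigma>_def)
  next
    case False
    then show ?thesis using that \<sigma>\<^sub>2(2)[of s] bij_betwE[OF \<sigma>\<^sub>2(1)] by (auto simp: \<sigma>_def)
  qed
  show thesis
    by (rule that[OF bij]; rule bij_betw_image_eq_if_mem_iff[OF bij]) (use sub mem in auto)
qed

lemma key_image_permutation:
  assumes bij: "bij_betw \<sigma> (Sset m) (Sset m)" and x0: "\<sigma> ` x0 m = x0 m"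
    and a: "a \<subseteq> Sset m" and c: "c \<subseteq> Sset m"
  shows "key m (\<sigma> ` a) (\<sigma> ` c) = key m a c"
proof -
  have inj: "inj_on \<sigma> (Sset m)" using bij by (simp add: bij_betw_def)
  have card_img: "card (\<sigma> ` A) = card A" if "A \<subseteq> Sset m" for A
    using card_image[OF inj_on_subset[OF inj that]] .
  have img_Int: "\<sigma> ` A \<inter> \<sigma> ` B = \<sigma> ` (A \<inter> B)" if "A \<subseteq> Sset m" "B \<subseteq> Sset m" for A B
    using inj_on_image_Int[OF inj that] by simp
  have x0a: "x0 m \<inter> \<sigma> ` a = \<sigma> ` (x0 m \<inter> a)" and x0c: "x0 m \<inter> \<sigma> ` c = \<sigma> ` (x0 m \<inter> c)"
    using img_Int[OF x0_subset_Sset a] img_Int[OF x0_subset_Sset c] x0 by simp_all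
  moreover have "x0 m \<inter> \<sigma> ` a \<inter> \<sigma> ` c = \<sigma> ` (x0 m \<inter> a \<inter> c)"
    using x0a img_Int[of "x0 m \<inter> a" c] a c by auto
  moreover have "x0 m \<inter> a \<subseteq> Sset m" "x0 m \<inter> c \<subseteq> Sset m" "a \<inter> c \<subseteq> Sset m" "x0 m \<inter> a \<inter> c \<subseteq> Sset m"
    using a c by auto
  ultimately show ?thesis
    using card_img a c img_Int[OF a c] by (simp add: key_def rho_def)
qed

lemma bij_betw_image_Xset:
  assumes bij: "bij_betw \<sigma> (Sset m) (Sset m)"
  shows "bij_betw (image \<sigma>) (Xset m) (Xset m)"
proof -
  have inj: "inj_on \<sigma> (Sset m)" using bij by (simp add: bij_betw_def)
  have into: "image \<sigma> ` Xset m \<subseteq> Xset m"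
  proof clarify
    fix w assume w: "w \<in> Xset m"
    have "card (\<sigma> ` w) = card w" using card_image[OF inj_on_subset[OF inj Xset_subset[OF w]]] .
    moreover have "\<sigma> ` w \<subseteq> Sset m" using Xset_subset[OF w] bij by (auto simp: bij_betw_def)
    ultimately show "\<sigma> ` w \<in> Xset m" using card_Xset_member[OF w] by (auto simp: Xset_def)
  qed
  have "inj_on (image \<sigma>) (Xset m)"
    using inj_on_image_eq_iff[OF inj Xset_subset Xset_subset] by (auto intro: inj_onI)
  then show ?thesis using endo_inj_surj[OF finite_Xset into] into by (simp add: bij_betw_def)
qed

lemma key_invariant_mmult:
  assumes M: "key_invariant m M" and N: "key_invariant m N"
  shows "key_invariant m (mmult m M N)"
proof (rule key_invariantI)
  fix y z assume "y \<notin> Xset m \<or> z \<notin> Xset m"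
  then have "M y w * N w z = 0" for w
    using key_invariant_outside[OF M, of y w] key_invariant_outside[OF N, of w z] by auto
  then show "mmult m M N y z = 0" unfolding mmult_def by (intro sum.neutral) blast
next
  fix y z y' z' assume y: "y \<in> Xset m" and z: "z \<in> Xset m" and y': "y' \<in> Xset m"
    and z': "z' \<in> Xset m" and key: "key m y z = key m y' z'"
  obtain \<sigma> where \<sigma>: "bij_betw \<sigma> (Sset m) (Sset m)" "\<sigma> ` x0 m = x0 m" "\<sigma> ` y = y'" "\<sigma> ` z = z'"
    using key_eq_imp_permutation[OF y z y' z' key] .
  note bij = bij_betw_image_Xset[OF \<sigma>(1)]
  have "mmult m M N y' z' = (\<Sum>w\<in>Xset m. M y' (\<sigma> ` w) * N (\<sigma> ` w) z')"
    unfolding mmult_def using sum.reindex_bij_betw[OF bij, of "\<lambda>w. M y' w * N w z'"] by simp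
  also have "\<dots> = (\<Sum>w\<in>Xset m. M y w * N w z)"
  proof (rule sum.cong)
    fix w assume w: "w \<in> Xset m"
    have w': "\<sigma> ` w \<in> Xset m" using bij_betwE[OF bij] w by blast
    have "key m y' (\<sigma> ` w) = key m y w" "key m (\<sigma> ` w) z' = key m w z"
      using key_image_permutation[OF \<sigma>(1,2)] Xset_subset y z w \<sigma>(3,4) by auto
    then show "M y' (\<sigma> ` w) * N (\<sigma> ` w) z' = M y w * N w z"
      using key_invariantD[OF M y' w' y w] key_invariantD[OF N w' z' w z] by simp
  qed simp
  finally show "mmult m M N y z = mmult m M N y' z'" by (simp add: mmult_def)
qed

lemma key_invariant_add:
  assumes M: "key_invariant m M" and N: "key_invariant m N"
  shows "key_invariant m (M + N)"
proof (rule key_invariantI)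
  fix y z y' z' assume "y \<in> Xset m" "z \<in> Xset m" "y' \<in> Xset m" "z' \<in> Xset m"
    "key m y z = key m y' z'"
  then show "(M + N) y z = (M + N) y' z'"
    using key_invariantD[OF M] key_invariantD[OF N] by (metis plus_fun_apply)
qed (simp add: key_invariant_outside[OF M] key_invariant_outside[OF N])

lemma key_invariant_cscale:
  assumes M: "key_invariant m M"
  shows "key_invariant m (cscale c M)"
proof (rule key_invariantI)
  fix y z y' z' assume "y \<in> Xset m" "z \<in> Xset m" "y' \<in> Xset m" "z' \<in> Xset m"
    "key m y z = key m y' z'"
  then show "cscale c M y z = cscale c M y' z'"
    using key_invariantD[OF M] by (metis cscale_def)
qed (simp add: cscale_def key_invariant_outside[OF M])

lemma key_invariant_idmat: "key_invariant m (idmat m)"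
proof (rule key_invariantI)
  fix y z y' z' assume "y \<in> Xset m" "z \<in> Xset m" "y' \<in> Xset m" "z' \<in> Xset m"
    "key m y z = key m y' z'"
  then show "idmat m y z = idmat m y' z'"
    using key_eq_imp_eq_iff[of y m z y' z'] by (simp add: idmat_def)
qed (auto simp: idmat_def)

lemma key_invariant_A1: "key_invariant m (A1 m)"
proof (rule key_invariantI)
  fix y z y' z' assume "y \<in> Xset m" "z \<in> Xset m" "y' \<in> Xset m" "z' \<in> Xset m"
    "key m y z = key m y' z'"
  then show "A1 m y z = A1 m y' z'"
    using adj_iff_card[of y m z] adj_iff_card[of y' m z'] by (simp add: A1_def key_eq_iff)
qed (auto simp: A1_def adj_def)

lemma key_invariant_Estar: "key_invariant m (Estar m i)"
proof (rule key_invariantI)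
  fix y z y' z' assume "y \<in> Xset m" "z \<in> Xset m" "y' \<in> Xset m" "z' \<in> Xset m"
    "key m y z = key m y' z'"
  then show "Estar m i y z = Estar m i y' z'"
    using key_eq_imp_eq_iff[of y m z y' z'] key_eq_imp_symdiff_card_x0_eq[of y m y' z z']
    by (simp add: Estar_eq)
qed (auto simp: Estar_eq)

lemma key_invariant_Talg: "A \<in> Talg m \<Longrightarrow> key_invariant m A"
proof (induction rule: Talg.induct)
  case (add A B)
  then show ?case using key_invariant_add by blast
qed (auto intro: key_invariant_idmat key_invariant_A1 key_invariant_Estar key_invariant_cscale
    key_invariant_mmult)

definition keys :: "nat \<Rightarrow> key set" where
  "keys m = (\<lambda>(y, z). key m y z) ` (Xset m \<times> Xset m)"

definition keymat :: "nat \<Rightarrow> key \<Rightarrow> cmat" where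
  "keymat m k = (case k of (a, b, q) \<Rightarrow> blockmat m a b q)"

lemma key_in_keys: "y \<in> Xset m \<Longrightarrow> z \<in> Xset m \<Longrightarrow> key m y z \<in> keys m"
  unfolding keys_def by force

lemma finite_keys: "finite (keys m)"
  unfolding keys_def using finite_Xset by simp

lemma keymat_key_apply:
  "y \<in> Xset m \<Longrightarrow> z \<in> Xset m \<Longrightarrow>
    keymat m (key m y z) y' z' =
      (if y' \<in> Xset m \<and> z' \<in> Xset m \<and> key m y' z' = key m y z then 1 else 0)"
  unfolding keymat_def key_def blockmat_def Xrel_def ksub_def Xset_def by auto

lemma keymat_apply:
  "k \<in> keys m \<Longrightarrow> keymat m k y z = (if y \<in> Xset m \<and> z \<in> Xset m \<and> key m y z = k then 1 else 0)"
  unfolding keys_def by (auto simp: keymat_key_apply)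

lemma key_invariant_keymat: "k \<in> keys m \<Longrightarrow> key_invariant m (keymat m k)"
  by (rule key_invariantI) (auto simp: keymat_apply)

definition key_rep :: "nat \<Rightarrow> key \<Rightarrow> nat set \<times> nat set" where
  "key_rep m k = (SOME (y, z). y \<in> Xset m \<and> z \<in> Xset m \<and> key m y z = k)"

lemma key_rep:
  assumes "k \<in> keys m"
  obtains y z where "key_rep m k = (y, z)" "y \<in> Xset m" "z \<in> Xset m" "key m y z = k"
proof -
  have "\<exists>p. case p of (y, z) \<Rightarrow> y \<in> Xset m \<and> z \<in> Xset m \<and> key m y z = k"
    using assms by (auto simp: keys_def)
  then have "case key_rep m k of (y, z) \<Rightarrow> y \<in> Xset m \<and> z \<in> Xset m \<and> key m y z = k"
    unfolding key_rep_def by (rule someI_ex)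
  then show thesis using that by (cases "key_rep m k") simp
qed

lemma sum_cmat_apply: "(sum F A) y z = (\<Sum>k\<in>A. F k y z)"
  by (induction A rule: infinite_finite_induct) auto

lemma key_invariant_eq_sum_keymat:
  assumes M: "key_invariant m M"
  shows "M = (\<Sum>k\<in>keys m. cscale (case_prod M (key_rep m k)) (keymat m k))"
proof (intro ext)
  fix y z
  show "M y z = (\<Sum>k\<in>keys m. cscale (case_prod M (key_rep m k)) (keymat m k)) y z"
  proof (cases "y \<in> Xset m \<and> z \<in> Xset m")
    case True
    have "(\<Sum>k\<in>keys m. cscale (case_prod M (key_rep m k)) (keymat m k)) y z
        = (\<Sum>k\<in>keys m. if k = key m y z then case_prod M (key_rep m k) else 0)"
      unfolding sum_cmat_apply cscale_def using True by (intro sum.cong) (auto simp: keymat_apply)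
    also have "\<dots> = case_prod M (key_rep m (key m y z))"
      using finite_keys key_in_keys True by simp
    also have "\<dots> = M y z"
    proof -
      obtain y' z' where "key_rep m (key m y z) = (y', z')" "y' \<in> Xset m" "z' \<in> Xset m"
          "key m y' z' = key m y z"
        using key_rep key_in_keys True by blast
      moreover have "M y' z' = M y z"
        using key_invariantD[OF M \<open>y' \<in> Xset m\<close> \<open>z' \<in> Xset m\<close>] True calculation(4) by blast
      ultimately show ?thesis by simp
    qed
    finally show ?thesis by simp
  next
    case False
    then have "cscale (case_prod M (key_rep m k)) (keymat m k) y z = 0" if "k \<in> keys m" for k
      using that by (auto simp: cscale_def keymat_apply)
    then have "(\<Sum>k\<in>keys m. cscale (case_prod M (key_rep m k)) (keymat m k)) y z = 0"
      unfolding sum_cmat_apply by (intro sum.neutral) blast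
    then show ?thesis using False key_invariant_outside[OF M] by simp
  qed
qed

lemma zero_in_Talg: "0 \<in> Talg m"
proof -
  have "cscale 0 (idmat m) \<in> Talg m" by (rule Talg.scale[OF Talg.gen_id])
  then show ?thesis by (simp add: cscale_def zero_fun_def)
qed

lemma sum_in_Talg: "(\<And>a. a \<in> A \<Longrightarrow> f a \<in> Talg m) \<Longrightarrow> sum f A \<in> Talg m"
  by (induction A rule: infinite_finite_induct) (auto intro: zero_in_Talg Talg.add)

lemma key_invariant_in_TalgI:
  assumes M: "key_invariant m M"
    and keymat_in: "\<And>y z. y \<in> Xset m \<Longrightarrow> z \<in> Xset m \<Longrightarrow> M y z \<noteq> 0 \<Longrightarrow> keymat m (key m y z) \<in> Talg m"
  shows "M \<in> Talg m"
proof -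
  have "cscale (case_prod M (key_rep m k)) (keymat m k) \<in> Talg m" if k: "k \<in> keys m" for k
  proof -
    obtain y z where "key_rep m k = (y, z)" and yz: "y \<in> Xset m" "z \<in> Xset m" "key m y z = k"
      using key_rep[OF k] .
    show ?thesis
    proof (cases "M y z = 0")
      case True
      then show ?thesis using \<open>key_rep m k = (y, z)\<close> zero_in_Talg
        by (simp add: cscale_def zero_fun_def)
    next
      case False
      then show ?thesis using keymat_in[of y z] \<open>key_rep m k = (y, z)\<close> yz
        by (auto intro: Talg.scale)
    qed
  qed
  then show ?thesis by (subst key_invariant_eq_sum_keymat[OF M]) (rule sum_in_Talg)
qed

lemma mmult_Estar_right:
  "mmult m N (Estar m l) y z = (if z \<in> Xset m \<and> symdiff_card (x0 m) z = l then N y z else 0)"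
proof (cases "z \<in> Xset m")
  case True
  have "mmult m N (Estar m l) y z =
      (\<Sum>w\<in>Xset m. if w = z then (if symdiff_card (x0 m) z = l then N y z else 0) else 0)"
    unfolding mmult_def Estar_eq by (rule sum.cong) auto
  then show ?thesis using True finite_Xset by simp
qed (auto simp: mmult_def Estar_eq intro!: sum.neutral)

lemma mmult_keymat_A1:
  assumes "k \<in> keys m" "y \<in> Xset m"
  shows "mmult m (keymat m k) (A1 m) y z = of_nat (card {u\<in>Xset m. key m y u = k \<and> adj m u z})"
proof -
  have "mmult m (keymat m k) (A1 m) y z = (\<Sum>u\<in>Xset m. of_bool (key m y u = k \<and> adj m u z))"
    unfolding mmult_def using assms by (intro sum.cong) (auto simp: keymat_apply A1_def)
  then show ?thesis using finite_Xset by (simp add: Int_def)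
qed

lemma key_diag_eq_iff:
  assumes y: "y \<in> Xset m" and y': "y' \<in> Xset m"
  shows "key m y' y' = key m y y \<longleftrightarrow> symdiff_card (x0 m) y' = symdiff_card (x0 m) y"
proof -
  have parity: "c = c' \<and> p = p'"
    if "c = m \<or> c = m + 1" "c' = m \<or> c' = m + 1" "l + 2 * p = m + c" "l + 2 * p' = m + c'"
    for c c' l p p' :: nat
    using that by presburger
  have "key m y' y' = key m y y \<longleftrightarrow> card y' = card y \<and> card (x0 m \<inter> y') = card (x0 m \<inter> y)"
    by (auto simp: key_eq_iff Int_assoc)
  also have "\<dots> \<longleftrightarrow> symdiff_card (x0 m) y' = symdiff_card (x0 m) y"
  proof
    assume "symdiff_card (x0 m) y' = symdiff_card (x0 m) y"
    then have "symdiff_card (x0 m) y' + 2 * card (x0 m \<inter> y) = m + card y"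
      using symdiff_card_x0[OF y] by simp
    then show "card y' = card y \<and> card (x0 m \<inter> y') = card (x0 m \<inter> y)"
      using parity[OF card_Xset_member[OF y'] card_Xset_member[OF y] symdiff_card_x0[OF y']]
      by blast
  qed (use symdiff_card_x0[OF y] symdiff_card_x0[OF y'] in simp)
  finally show ?thesis .
qed

lemma keymat_diag_eq_Estar:
  assumes y: "y \<in> Xset m"
  shows "keymat m (key m y y) = Estar m (symdiff_card (x0 m) y)"
proof (intro ext)
  fix y' z'
  have "key m y' z' = key m y y \<longleftrightarrow> y' = z' \<and> key m y' y' = key m y y"
    if "y' \<in> Xset m" "z' \<in> Xset m"
    using key_eq_imp_eq_iff[OF that y y] by auto
  then show "keymat m (key m y y) y' z' = Estar m (symdiff_card (x0 m) y) y' z'"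
    by (auto simp: keymat_key_apply[OF y y] Estar_eq key_diag_eq_iff[OF y])
qed

text \<open>The key of (a, v) for a neighbour v of u farther away from a, computed from the key
  (p, q, i, j, t, r) of (a, u) and from l = |x0 \<Delta> v|: going up (q = m) adds a point outside a,
  going down removes a point of a, and l tells whether this point lies in x0.\<close>

definition key_step :: "nat \<Rightarrow> key \<Rightarrow> nat \<Rightarrow> key" where
  "key_step m k l = (case k of (p, q, i, j, t, r) \<Rightarrow>
     if q = m then (let e = (if l + 1 + 2 * j = m + q then 1 else 0) in (p, m + 1, i, j + e, t, r))
     else (let e = (if l + 2 * j = m + q + 1 then 1 else 0) in (p, m, i, j - e, t - 1, r - e)))"

lemma key_step_eq:
  assumes a: "a \<in> Xset m" and u: "u \<in> Xset m" and adj: "adj m u v"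
    and farther: "symdiff_card a v = symdiff_card a u + 1"
  shows "key m a v = key_step m (key m a u) (symdiff_card (x0 m) v)"
proof -
  have fa: "finite a" and fu: "finite u" using a u finite_Xset_member by auto
  have level: "symdiff_card (x0 m) u + 2 * card (x0 m \<inter> u) = m + card u"
    using symdiff_card_x0[OF u] .
  from adj show ?thesis
  proof (cases rule: adjE)
    case (up b)
    have "b \<notin> a" using symdiff_card_insert_mem[OF fa up(1)] farther up(3) by auto
    moreover have "symdiff_card (x0 m) v + 1 + 2 * card (x0 m \<inter> u) = m + card u \<longleftrightarrow> b \<in> x0 m"
      using symdiff_card_insert_mem[OF finite_x0 up(1)]
        symdiff_card_insert_notin[OF fu up(1), of "x0 m"] level up(3) by (cases "b \<in> x0 m") auto
    ultimately show ?thesis using up fu unfolding key_def rho_def key_step_def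
      by (auto simp: Int_insert_right card_insert_if Let_def Int_assoc)
  next
    case (down b)
    have "b \<in> a" using symdiff_card_remove_notin[OF fu down(1)] farther down(2) by force
    moreover have "symdiff_card (x0 m) v + 2 * card (x0 m \<inter> u) = m + card u + 1 \<longleftrightarrow> b \<in> x0 m"
      using symdiff_card_remove_mem[OF finite_x0 down(1)]
        symdiff_card_remove_notin[OF fu down(1), of "x0 m"] level down(2) by (cases "b \<in> x0 m") auto
    moreover have "x0 m \<inter> (u - {b}) = (x0 m \<inter> u) - {b}" "a \<inter> (u - {b}) = (a \<inter> u) - {b}"
      "x0 m \<inter> a \<inter> (u - {b}) = (x0 m \<inter> a \<inter> u) - {b}" by auto
    ultimately show ?thesis using down fu unfolding key_def rho_def key_step_def
      by (auto simp: card_Diff_singleton_if Let_def)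
  qed
qed

lemma key_eq_extend:
  assumes "a \<in> Xset m" "u \<in> Xset m" "adj m u v" "symdiff_card a u < symdiff_card a v"
    and "a' \<in> Xset m" "u' \<in> Xset m" "adj m u' v'" "symdiff_card a' u' < symdiff_card a' v'"
    and "key m a u = key m a' u'" "symdiff_card (x0 m) v = symdiff_card (x0 m) v'"
  shows "key m a v = key m a' v'"
proof -
  have "symdiff_card a v = symdiff_card a u + 1" "symdiff_card a' v' = symdiff_card a' u' + 1"
    using assms symdiff_card_adj_le[of m u v a] symdiff_card_adj_le[of m u' v' a']
      finite_Xset_member by force+
  then show ?thesis using assms key_step_eq by metis
qed

lemma keymat_step_product:
  assumes y: "y \<in> Xset m" and z: "z \<in> Xset m" and z': "z' \<in> Xset m" and z'z: "adj m z' z"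
    and closer: "symdiff_card y z' < symdiff_card y z"
  defines "W \<equiv> mmult m (mmult m (keymat m (key m y z')) (A1 m)) (Estar m (symdiff_card (x0 m) z))"
  shows "W y z \<noteq> 0"
    and "\<And>y0 z0. y0 \<in> Xset m \<Longrightarrow> z0 \<in> Xset m \<Longrightarrow> symdiff_card y z' < symdiff_card y0 z0 \<Longrightarrow>
      key m y0 z0 \<noteq> key m y z \<Longrightarrow> W y0 z0 = 0"
proof -
  define S where "S y0 z0 = {u \<in> Xset m. key m y0 u = key m y z' \<and> adj m u z0}" for y0 z0
  have W_apply: "W y0 z0 = (if symdiff_card (x0 m) z0 = symdiff_card (x0 m) z
      then of_nat (card (S y0 z0)) else 0)" if "y0 \<in> Xset m" "z0 \<in> Xset m" for y0 z0
    using that by (simp add: W_def S_def mmult_Estar_right mmult_keymat_A1 key_in_keys y z')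
  have "z' \<in> S y z" using z' z'z by (simp add: S_def)
  then have "card (S y z) \<noteq> 0" using finite_Xset by (auto simp: S_def)
  then show "W y z \<noteq> 0" using W_apply[OF y z] by simp
  fix y0 z0 assume y0: "y0 \<in> Xset m" and z0: "z0 \<in> Xset m"
    and far: "symdiff_card y z' < symdiff_card y0 z0" and other: "key m y0 z0 \<noteq> key m y z"
  have "S y0 z0 = {}" if level: "symdiff_card (x0 m) z0 = symdiff_card (x0 m) z"
  proof (intro equals0I)
    fix u assume "u \<in> S y0 z0"
    then have u: "u \<in> Xset m" "key m y0 u = key m y z'" "adj m u z0" by (auto simp: S_def)
    then have "symdiff_card y0 u = symdiff_card y z'"
      using key_eq_imp_symdiff_card_eq[OF y0 u(1) y z'] by simp
    then have "key m y0 z0 = key m y z"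
      using key_eq_extend[OF y0 u(1,3) _ y z' z'z closer u(2) level] far by simp
    then show False using other by simp
  qed
  then show "W y0 z0 = 0" using W_apply[OF y0 z0] by auto
qed

lemma keymat_in_Talg_step:
  assumes IH: "\<And>y z. y \<in> Xset m \<Longrightarrow> z \<in> Xset m \<Longrightarrow> symdiff_card y z \<le> n \<Longrightarrow>
      keymat m (key m y z) \<in> Talg m"
    and y: "y \<in> Xset m" and z: "z \<in> Xset m" and dist: "symdiff_card y z = Suc n"
  shows "keymat m (key m y z) \<in> Talg m"
proof -
  have "z \<noteq> y" using dist by auto
  then obtain z' where "adj m z z'" "symdiff_card y z' + 1 = symdiff_card y z"
    using adj_towards[OF z y] by blast
  then have z'_dist: "symdiff_card y z' = n" and z'z: "adj m z' z" and z': "z' \<in> Xset m"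
    using dist by (auto simp: adj_def)
  define W where
    "W = mmult m (mmult m (keymat m (key m y z')) (A1 m)) (Estar m (symdiff_card (x0 m) z))"
  have W_in: "W \<in> Talg m"
    unfolding W_def using IH[OF y z'] z'_dist symdiff_card_x0_le[OF z]
    by (intro Talg.mult Talg.gen_A Talg.gen_E) simp_all
  have "symdiff_card y z' < symdiff_card y z" using z'_dist dist by simp
  note product = keymat_step_product[OF y z z' z'z this, folded W_def]
  define c where "c = W y z"
  have "c \<noteq> 0" unfolding c_def by (rule product(1))
  define R where "R = W + cscale (- c) (keymat m (key m y z))"
  have "R \<in> Talg m"
  proof (rule key_invariant_in_TalgI)
    show "key_invariant m R"
      unfolding R_def using key_invariant_Talg[OF W_in] key_invariant_keymat[OF key_in_keys[OF y z]]
      by (intro key_invariant_add key_invariant_cscale)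
    fix y0 z0 assume y0: "y0 \<in> Xset m" and z0: "z0 \<in> Xset m" and "R y0 z0 \<noteq> 0"
    have "symdiff_card y0 z0 \<le> n"
    proof (rule ccontr)
      assume "\<not> symdiff_card y0 z0 \<le> n"
      then have far: "symdiff_card y z' < symdiff_card y0 z0" using z'_dist by simp
      have "W y0 z0 = (if key m y0 z0 = key m y z then c else 0)"
        using key_invariantD[OF key_invariant_Talg[OF W_in] y0 z0 y z] product(2)[OF y0 z0 far]
        by (auto simp: c_def)
      then have "R y0 z0 = 0" by (simp add: R_def cscale_def keymat_key_apply[OF y z] y0 z0)
      then show False using \<open>R y0 z0 \<noteq> 0\<close> by simp
    qed
    then show "keymat m (key m y0 z0) \<in> Talg m" using IH[OF y0 z0] by simp
  qed
  moreover have "keymat m (key m y z) = cscale (1 / c) (W + cscale (- 1) R)"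
    using \<open>c \<noteq> 0\<close> by (simp add: R_def cscale_def fun_eq_iff)
  ultimately show ?thesis using W_in by (simp add: Talg.add Talg.scale)
qed

lemma keymat_in_Talg:
  assumes "y \<in> Xset m" "z \<in> Xset m"
  shows "keymat m (key m y z) \<in> Talg m"
proof -
  have "keymat m (key m y z) \<in> Talg m" if "y \<in> Xset m" "z \<in> Xset m" "symdiff_card y z \<le> n" for n y z
    using that
  proof (induction n arbitrary: y z)
    case 0
    then have "z = y"
      using symdiff_card_eq_0_iff[OF finite_Xset_member finite_Xset_member, of y m z m] by simp
    then show ?case
      using keymat_diag_eq_Estar[OF \<open>y \<in> Xset m\<close>] symdiff_card_x0_le[OF \<open>y \<in> Xset m\<close>]
      by (simp add: Talg.gen_E)
  next
    case (Suc n)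
    show ?case
    proof (cases "symdiff_card y z \<le> n")
      case True
      then show ?thesis using Suc.IH Suc.prems(1,2) by blast
    next
      case False
      then have "symdiff_card y z = Suc n" using Suc.prems(3) by simp
      then show ?thesis using keymat_in_Talg_step[OF Suc.IH Suc.prems(1,2)] by blast
    qed
  qed
  then show ?thesis using assms by blast
qed

lemma module_cscale: "module cscale"
  by unfold_locales (simp_all add: cscale_def fun_eq_iff algebra_simps)

lemma cmat_independent_if_private_entries:
  assumes "\<And>v. v \<in> B \<Longrightarrow> \<exists>y z. v y z \<noteq> 0 \<and> (\<forall>w\<in>B. w \<noteq> v \<longrightarrow> w y z = 0)"
  shows "\<not> module.dependent cscale B"
proof
  interpret module cscale by (rule module_cscale)
  assume "dependent B"
  then obtain t u v where t: "finite t" "t \<subseteq> B" "(\<Sum>w\<in>t. cscale (u w) w) = 0"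
    and v: "v \<in> t" "u v \<noteq> 0"
    unfolding dependent_explicit by blast
  obtain y z where vyz: "v y z \<noteq> 0" and others: "\<forall>w\<in>B. w \<noteq> v \<longrightarrow> w y z = 0"
    using assms t(2) v(1) by blast
  have "0 = (\<Sum>w\<in>t. cscale (u w) w) y z" using t(3) by simp
  also have "\<dots> = (\<Sum>w\<in>t. if w = v then u v * v y z else 0)"
    unfolding sum_cmat_apply cscale_def using others t(2) by (intro sum.cong) auto
  also have "\<dots> = u v * v y z" using t(1) v(1) by simp
  finally show False using v(2) vyz by simp
qed

lemma keymat_at_key_rep:
  assumes "k \<in> keys m" "k' \<in> keys m"
  shows "case_prod (keymat m k') (key_rep m k) = (if k' = k then 1 else 0)"
proof -
  obtain y z where "key_rep m k = (y, z)" "y \<in> Xset m" "z \<in> Xset m" "key m y z = k"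
    using key_rep[OF assms(1)] .
  then show ?thesis using assms(2) by (auto simp: keymat_apply)
qed

lemma inj_on_keymat: "inj_on (keymat m) (keys m)"
proof (rule inj_onI)
  fix k k' assume k: "k \<in> keys m" "k' \<in> keys m" and "keymat m k = keymat m k'"
  then have "case_prod (keymat m k') (key_rep m k) = 1" using keymat_at_key_rep[of k m k] by simp
  then show "k = k'" using keymat_at_key_rep[OF k] by (metis zero_neq_one)
qed

lemma keymat_independent: "\<not> module.dependent cscale (keymat m ` keys m)"
proof (rule cmat_independent_if_private_entries)
  fix v assume "v \<in> keymat m ` keys m"
  then obtain k where k: "k \<in> keys m" "v = keymat m k" by blast
  obtain y z where rep: "key_rep m k = (y, z)" by (cases "key_rep m k")
  have at: "keymat m k' y z = (if k' = k then 1 else 0)" if "k' \<in> keys m" for k'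
    using keymat_at_key_rep[OF k(1) that] rep by simp
  show "\<exists>y z. v y z \<noteq> 0 \<and> (\<forall>w\<in>keymat m ` keys m. w \<noteq> v \<longrightarrow> w y z = 0)"
  proof (intro exI conjI ballI impI)
    show "v y z \<noteq> 0" using at[OF k(1)] k(2) by simp
    fix w assume "w \<in> keymat m ` keys m" "w \<noteq> v"
    then show "w y z = 0" using at k(2) by auto
  qed
qed

lemma span_keymat_eq_Talg: "module.span cscale (keymat m ` keys m) = Talg m"
proof -
  interpret module cscale by (rule module_cscale)
  have "subspace (Talg m)"
    by (rule subspaceI) (auto intro: zero_in_Talg Talg.add Talg.scale)
  moreover have "keymat m ` keys m \<subseteq> Talg m"
    by (auto simp: keys_def intro: keymat_in_Talg)
  ultimately have "span (keymat m ` keys m) \<subseteq> Talg m" by (rule span_minimal[rotated])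
  moreover have "A \<in> span (keymat m ` keys m)" if "A \<in> Talg m" for A
    using key_invariant_eq_sum_keymat[OF key_invariant_Talg[OF that]]
    by (metis (no_types, lifting) image_eqI span_base span_scale span_sum)
  ultimately show ?thesis by blast
qed

definition block_key :: "nat \<Rightarrow> nat \<times> (nat \<times> nat \<times> nat \<times> nat) \<Rightarrow> key" where
  "block_key m kq =
    (case kq of (k, q) \<Rightarrow> (if k \<le> 1 then m else m + 1, if even k then m else m + 1, q))"

lemma bfam_eq_keymat: "kq \<in> bidx m \<Longrightarrow> bfam m kq = keymat m (block_key m kq)"
  by (auto simp: bidx_def bfam_def block_key_def keymat_def Mmat_def Rmat_def Lmat_def Fmat_def)

lemma keys_eq: "keys m = {(a, b, q). (a = m \<or> a = m + 1) \<and> (b = m \<or> b = m + 1) \<and> q \<in> Iset m a b}"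
proof (intro set_eqI iffI)
  fix k assume "k \<in> keys m"
  then obtain y z where "y \<in> Xset m" "z \<in> Xset m" "k = key m y z" by (auto simp: keys_def)
  then show "k \<in> {(a, b, q). (a = m \<or> a = m + 1) \<and> (b = m \<or> b = m + 1) \<and> q \<in> Iset m a b}"
    by (auto simp: key_def Iset_def ksub_def Xset_def)
next
  fix k assume "k \<in> {(a, b, q). (a = m \<or> a = m + 1) \<and> (b = m \<or> b = m + 1) \<and> q \<in> Iset m a b}"
  then obtain y z where "y \<in> Xset m" "z \<in> Xset m" "k = key m y z"
    by (auto simp: key_def Iset_def ksub_def Xset_def)
  then show "k \<in> keys m" by (simp add: key_in_keys)
qed

lemma bij_betw_block_key: "bij_betw (block_key m) (bidx m) (keys m)"
proof (rule bij_betw_imageI)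
  show "inj_on (block_key m) (bidx m)"
    by (rule inj_onI) (auto simp: bidx_def block_key_def split: if_splits)
  show "block_key m ` bidx m = keys m"
  proof
    show "block_key m ` bidx m \<subseteq> keys m" by (auto simp: keys_eq bidx_def block_key_def)
    show "keys m \<subseteq> block_key m ` bidx m"
    proof
      fix k assume "k \<in> keys m"
      then obtain a b q where k: "k = (a, b, q)" "a = m \<or> a = m + 1" "b = m \<or> b = m + 1"
          "q \<in> Iset m a b"
        by (auto simp: keys_eq)
      define i :: nat where "i = (if a = m then 0 else 2) + (if b = m then 0 else 1)"
      have "(i, q) \<in> bidx m" "block_key m (i, q) = k"
        using k by (auto simp: i_def bidx_def block_key_def)
      then show "k \<in> block_key m ` bidx m" by force
    qed
  qed
qed

theorem corollary4p12:
  fixes m :: nat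
  assumes "m \<ge> 3"
  shows "inj_on (bfam m) (bidx m)
       \<and> \<not> module.dependent cscale (bfam m ` bidx m)
       \<and> module.span cscale (bfam m ` bidx m) = Talg m"
proof -
  have bij: "bij_betw (block_key m) (bidx m) (keys m)" by (rule bij_betw_block_key)
  then have img: "block_key m ` bidx m = keys m" by (simp add: bij_betw_def)
  have bfam: "bfam m kq = (keymat m \<circ> block_key m) kq" if "kq \<in> bidx m" for kq
    using bfam_eq_keymat[OF that] by simp
  have "inj_on (keymat m \<circ> block_key m) (bidx m)"
    by (rule comp_inj_on[OF bij_betw_imp_inj_on[OF bij]]) (simp only: img inj_on_keymat)
  then have inj: "inj_on (bfam m) (bidx m)" using inj_on_cong[of "bidx m" "bfam m"] bfam by blast
  have "bfam m ` bidx m = (keymat m \<circ> block_key m) ` bidx m"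
    using bfam by (rule image_cong[OF refl])
  also have "\<dots> = keymat m ` keys m" by (simp only: image_comp[symmetric] img)
  finally show ?thesis
    using inj keymat_independent[of m] span_keymat_eq_Talg[of m] by (simp only:) blast
qed

end
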